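(* Let $v:\mathbb{R}^d\times(0,\tau)\to\mathbb{R}^d$ satisfy the standing assumption below, let $\phi^t$ denote the flow map of $\dot x=v(x,t)$, and let $\Omega\subset\mathbb{R}^d$ be compact. Then for every $\varepsilon>0$ there exist $N\in\mathbb{Z}^+$ and piecewise smooth functions $a_i:[0,\tau]\to\mathbb{R}^d$, $w_i:[0,\tau]\to\mathbb{R}^d$, $b_i:[0,\tau]\to\mathbb{R}$ ($i=1,\dots,N$) such that, with $$\tilde v(x,t)=\sum_{i=1}^N a_i(t)\tanh(w_i(t)\cdot x+b_i(t)),$$ the flow map $\tilde\phi^t$ of $\dot x=\tilde v(x,t)$ satisfies $\|\phi^t(x)-\tilde\phi^t(x)\|\le\varepsilon$ for all $x\in\Omega$ and $t\in[0,\tau]$.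
   Context: Standing assumption on $v$: $v(x,t)$ is Lipschitz continuous in $x\in\mathbb{R}^d$ and piecewise smooth in $t\in(0,\tau)$, and on each piece $v$ is continuous in $(x,t)$. The flow map $\phi^t$ sends an initial value $x_0$ to the solution value $x(t)$. *)

theory Defs
  imports "HOL-Analysis.Analysis"
begin

definition smooth_on :: "real set \<Rightarrow> (real \<Rightarrow> 'b::real_normed_vector) \<Rightarrow> bool" where
  "smooth_on S f \<longleftrightarrow>
     (\<exists>D :: nat \<Rightarrow> real \<Rightarrow> 'b. (\<forall>t\<in>S. D 0 t = f t) \<and>
        (\<forall>n. \<forall>t\<in>S. (D n has_vector_derivative D (Suc n) t) (at t)))"

definition consecutive :: "real \<Rightarrow> real set \<Rightarrow> real \<Rightarrow> real \<Rightarrow> bool" where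
  "consecutive \<tau> K s t \<longleftrightarrow>
     s \<in> insert 0 (insert \<tau> K) \<and> t \<in> insert 0 (insert \<tau> K) \<and> s < t \<and> {s<..<t} \<inter> K = {}"

definition piecewise_smooth_fun :: "real \<Rightarrow> (real \<Rightarrow> 'b::real_normed_vector) \<Rightarrow> bool" where
  "piecewise_smooth_fun \<tau> f \<longleftrightarrow>
     (\<exists>K. finite K \<and> K \<subseteq> {0<..<\<tau>} \<and>
        (\<forall>s t. consecutive \<tau> K s t \<longrightarrow>
           smooth_on {s<..<t} f \<and>
           (\<exists>g. continuous_on {s..t} g \<and> (\<forall>r\<in>{s<..<t}. g r = f r))))"

definition standing_assumption :: "real \<Rightarrow> ('a::euclidean_space \<Rightarrow> real \<Rightarrow> 'a) \<Rightarrow> bool" where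
  "standing_assumption \<tau> v \<longleftrightarrow>
     (\<exists>L. \<forall>t\<in>{0<..<\<tau>}. \<forall>x y. norm (v x t - v y t) \<le> L * norm (x - y)) \<and>
     (\<exists>K. finite K \<and> K \<subseteq> {0<..<\<tau>} \<and>
        (\<forall>s t. consecutive \<tau> K s t \<longrightarrow>
           (\<forall>x. smooth_on {s<..<t} (v x)) \<and>
           (\<exists>g. continuous_on (UNIV \<times> {s..t}) (\<lambda>(x, r). g x r) \<and>
                (\<forall>x. \<forall>r\<in>{s<..<t}. g x r = v x r))))"

definition is_flow :: "real \<Rightarrow> ('a::euclidean_space \<Rightarrow> real \<Rightarrow> 'a) \<Rightarrow> (real \<Rightarrow> 'a \<Rightarrow> 'a) \<Rightarrow> bool" where
  "is_flow \<tau> v \<phi> \<longleftrightarrow>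
     (\<forall>x0. continuous_on {0..\<tau>} (\<lambda>t. \<phi> t x0) \<and>
        (\<forall>t\<in>{0..\<tau>}. ((\<lambda>s. v (\<phi> s x0) s) has_integral (\<phi> t x0 - x0)) {0..t}))"

end

theory Submission
  imports Defs
begin

text \<open>
  On each of the finitely many time pieces the field extends continuously to a compact set
  containing every trajectory that stays \<open>\<epsilon>\<close>-close to those of \<open>v\<close>. There it is uniformly
  \<open>\<delta>\<close>-close to a tanh network in the input \<open>(x, t)\<close>: by Stone--Weierstrass the span of the
  exponentials \<open>exp (w \<bullet> z)\<close> is dense, and each exponential is a limit of a constant plus one
  shifted tanh neuron. Switching networks at the breakpoints gives a field of the required
  form with piecewise affine parameters; it is bounded and globally Lipschitz, so its flow
  exists by Picard iteration. Gronwall's inequality, applied up to the first time the two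
  flows are \<open>\<epsilon>\<close> apart, bounds their distance by \<open>\<delta> \<tau> exp (L \<tau>)\<close>, which is below \<open>\<epsilon>\<close>.
\<close>

section \<open>Tanh networks\<close>

definition tanh_net :: "('c::real_vector \<times> 'b::real_inner \<times> real) list \<Rightarrow> 'b \<Rightarrow> 'c" where
  "tanh_net l z = (\<Sum>(a, w, b)\<leftarrow>l. tanh (w \<bullet> z + b) *\<^sub>R a)"

lemma tanh_net_Nil [simp]: "tanh_net [] z = 0"
  by (simp add: tanh_net_def)

lemma tanh_net_Cons [simp]: "tanh_net ((a, w, b) # l) z = tanh (w \<bullet> z + b) *\<^sub>R a + tanh_net l z"
  by (simp add: tanh_net_def)

lemma tanh_net_append [simp]: "tanh_net (l1 @ l2) z = tanh_net l1 z + tanh_net l2 z"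
  by (simp add: tanh_net_def)

lemma tanh_net_map_scaleR:
  "tanh_net (map (\<lambda>(a, w, b). (a *\<^sub>R e, w, b)) l) z = tanh_net l z *\<^sub>R e"
  by (induction l) (auto simp: algebra_simps)

lemma continuous_on_tanh_net:
  fixes l :: "('c::real_normed_vector \<times> 'b::real_inner \<times> real) list"
  shows "continuous_on UNIV (tanh_net l)"
proof (induction l)
  case (Cons e l)
  obtain a w b where e: "e = (a, w, b)" by (cases e)
  have "continuous_on UNIV (\<lambda>z. tanh (w \<bullet> z + b) *\<^sub>R a + tanh_net l z)"
    using Cons.IH by (intro continuous_intros) auto
  moreover have "tanh_net (e # l) = (\<lambda>z. tanh (w \<bullet> z + b) *\<^sub>R a + tanh_net l z)"
    by (simp add: e fun_eq_iff)
  ultimately show ?case by simp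
qed (simp add: tanh_net_def [abs_def])

definition tanh_net_amplitude :: "('c::real_normed_vector \<times> 'b \<times> real) list \<Rightarrow> real" where
  "tanh_net_amplitude l = (\<Sum>(a, w, b)\<leftarrow>l. norm a)"

definition tanh_net_lipschitz_const :: "('c::real_normed_vector \<times> 'b::real_normed_vector \<times> real) list \<Rightarrow> real" where
  "tanh_net_lipschitz_const l = (\<Sum>(a, w, b)\<leftarrow>l. norm a * norm w)"

lemma tanh_net_lipschitz_const_nonneg: "0 \<le> tanh_net_lipschitz_const l"
  unfolding tanh_net_lipschitz_const_def by (induction l) auto

lemma abs_tanh_le_1: "\<bar>tanh (x::real)\<bar> \<le> 1"
  using tanh_real_bounds[of x] by auto

lemma tanh_lipschitz: "\<bar>tanh x - tanh y\<bar> \<le> \<bar>x - y\<bar>" for x y :: real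
proof -
  have "norm (tanh x - tanh y) \<le> 1 * norm (x - y)"
  proof (rule field_differentiable_bound[of UNIV _ "\<lambda>z. 1 - tanh z ^ 2"])
    show "(tanh has_field_derivative 1 - tanh z ^ 2) (at z within UNIV)" for z :: real
      by (rule derivative_eq_intros refl | simp add: cosh_real_pos[THEN less_imp_neq, symmetric])+
    show "norm (1 - tanh z ^ 2) \<le> 1" for z :: real
      using abs_square_le_1[of "tanh z"] abs_tanh_le_1[of z] by simp
  qed auto
  then show ?thesis by simp
qed

lemma norm_tanh_net_le: "norm (tanh_net l z) \<le> tanh_net_amplitude l"
proof (induction l)
  case (Cons e l)
  obtain a w b where e: "e = (a, w, b)" by (cases e)
  have "norm (tanh_net (e # l) z) \<le> norm (tanh (w \<bullet> z + b) *\<^sub>R a) + norm (tanh_net l z)"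
    unfolding e tanh_net_Cons by (rule norm_triangle_ineq)
  also have "\<dots> \<le> norm a + tanh_net_amplitude l"
    using abs_tanh_le_1 Cons.IH by (intro add_mono) (simp_all add: mult_left_le_one_le)
  finally show ?case by (simp add: e tanh_net_amplitude_def)
qed (simp add: tanh_net_amplitude_def)

lemma tanh_net_lipschitz:
  "norm (tanh_net l z - tanh_net l z') \<le> tanh_net_lipschitz_const l * norm (z - z')"
proof (induction l)
  case (Cons e l)
  obtain a w b where e: "e = (a, w, b)" by (cases e)
  have "\<bar>tanh (w \<bullet> z + b) - tanh (w \<bullet> z' + b)\<bar> \<le> norm w * norm (z - z')"
    using tanh_lipschitz[of "w \<bullet> z + b" "w \<bullet> z' + b"] Cauchy_Schwarz_ineq2[of w "z - z'"]
    by (simp add: inner_diff_right)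
  then have "norm a * \<bar>tanh (w \<bullet> z + b) - tanh (w \<bullet> z' + b)\<bar> \<le> norm a * (norm w * norm (z - z'))"
    by (rule mult_left_mono) simp
  then have neuron: "norm ((tanh (w \<bullet> z + b) - tanh (w \<bullet> z' + b)) *\<^sub>R a) \<le> norm a * norm w * norm (z - z')"
    by (simp add: mult.commute mult.left_commute)
  have "tanh_net (e # l) z - tanh_net (e # l) z' =
      (tanh (w \<bullet> z + b) - tanh (w \<bullet> z' + b)) *\<^sub>R a + (tanh_net l z - tanh_net l z')"
    by (simp add: e algebra_simps)
  then have "norm (tanh_net (e # l) z - tanh_net (e # l) z')
      \<le> norm ((tanh (w \<bullet> z + b) - tanh (w \<bullet> z' + b)) *\<^sub>R a) + norm (tanh_net l z - tanh_net l z')"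
    by (simp only: norm_triangle_ineq)
  also have "\<dots> \<le> norm a * norm w * norm (z - z') + tanh_net_lipschitz_const l * norm (z - z')"
    using neuron Cons.IH by (rule add_mono)
  finally show ?case by (simp add: e tanh_net_lipschitz_const_def distrib_right)
qed (simp add: tanh_net_lipschitz_const_def)

section \<open>Universal approximation\<close>

definition tanh_approximable :: "'b::real_inner set \<Rightarrow> ('b \<Rightarrow> 'c::real_normed_vector) \<Rightarrow> bool" where
  "tanh_approximable S f \<longleftrightarrow> (\<forall>\<delta>>0. \<exists>l. \<forall>z\<in>S. norm (f z - tanh_net l z) \<le> \<delta>)"

lemma tanh_approximable_zero: "tanh_approximable S (\<lambda>z. 0)"
  unfolding tanh_approximable_def by (auto intro: exI[of _ "[]"])

lemma tanh_approximable_add: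
  assumes "tanh_approximable S f" "tanh_approximable S g"
  shows "tanh_approximable S (\<lambda>z. f z + g z)"
  unfolding tanh_approximable_def
proof (intro allI impI)
  fix \<delta> :: real assume "\<delta> > 0"
  then obtain l1 l2 where l1: "\<forall>z\<in>S. norm (f z - tanh_net l1 z) \<le> \<delta>/2"
    and l2: "\<forall>z\<in>S. norm (g z - tanh_net l2 z) \<le> \<delta>/2"
    using assms unfolding tanh_approximable_def by (meson half_gt_zero)
  have "norm (f z + g z - tanh_net (l1 @ l2) z) \<le> \<delta>" if "z \<in> S" for z
  proof -
    have "f z + g z - tanh_net (l1 @ l2) z = (f z - tanh_net l1 z) + (g z - tanh_net l2 z)"
      by simp
    then have "norm (f z + g z - tanh_net (l1 @ l2) z)
        \<le> norm (f z - tanh_net l1 z) + norm (g z - tanh_net l2 z)"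
      by (metis norm_triangle_ineq)
    then show ?thesis using l1[rule_format, OF that] l2[rule_format, OF that] by linarith
  qed
  then show "\<exists>l. \<forall>z\<in>S. norm (f z + g z - tanh_net l z) \<le> \<delta>" by blast
qed

lemma tanh_approximable_sum:
  assumes "finite I" "\<And>i. i \<in> I \<Longrightarrow> tanh_approximable S (f i)"
  shows "tanh_approximable S (\<lambda>z. \<Sum>i\<in>I. f i z)"
  using assms by (induction I rule: finite_induct) (auto intro: tanh_approximable_add tanh_approximable_zero)

lemma tanh_approximable_scaleR:
  fixes f :: "'b::real_inner \<Rightarrow> real"
  assumes "tanh_approximable S f"
  shows "tanh_approximable S (\<lambda>z. f z *\<^sub>R e)"
  unfolding tanh_approximable_def
proof (intro allI impI)
  fix \<delta> :: real assume "\<delta> > 0"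
  then have pos: "\<delta> / (norm e + 1) > 0"
    by (simp add: add_nonneg_pos)
  then obtain l where l: "\<forall>z\<in>S. norm (f z - tanh_net l z) \<le> \<delta> / (norm e + 1)"
    using assms unfolding tanh_approximable_def by blast
  have "norm (f z *\<^sub>R e - tanh_net (map (\<lambda>(a, w, b). (a *\<^sub>R e, w, b)) l) z) \<le> \<delta>" if "z \<in> S" for z
  proof -
    have "norm (f z *\<^sub>R e - tanh_net (map (\<lambda>(a, w, b). (a *\<^sub>R e, w, b)) l) z)
        = \<bar>f z - tanh_net l z\<bar> * norm e"
      unfolding tanh_net_map_scaleR by (simp flip: scaleR_diff_left)
    also have "\<dots> \<le> \<delta> / (norm e + 1) * (norm e + 1)"
      using l that pos by (intro mult_mono) simp_all
    also have "\<dots> = \<delta>"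
    proof -
      have "norm e + 1 \<noteq> 0" using norm_ge_zero[of e] by linarith
      then show ?thesis by simp
    qed
    finally show ?thesis .
  qed
  then show "\<exists>l. \<forall>z\<in>S. norm (f z *\<^sub>R e - tanh_net l z) \<le> \<delta>" by blast
qed

lemma tanh_approximable_uniform_limit:
  assumes "\<And>n. tanh_approximable S (F n)" and "uniform_limit S F f sequentially"
  shows "tanh_approximable S f"
  unfolding tanh_approximable_def
proof (intro allI impI)
  fix \<delta> :: real assume \<delta>: "\<delta> > 0"
  have "\<forall>\<^sub>F n in sequentially. \<forall>z\<in>S. dist (F n z) (f z) < \<delta>/2"
    using uniform_limitD[OF assms(2) half_gt_zero[OF \<delta>]] .
  then obtain n where n: "\<forall>z\<in>S. dist (F n z) (f z) < \<delta>/2"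
    using eventually_sequentially by auto
  obtain l where l: "\<forall>z\<in>S. norm (F n z - tanh_net l z) \<le> \<delta>/2"
    using assms(1)[of n] \<delta> unfolding tanh_approximable_def by (meson half_gt_zero)
  have "norm (f z - tanh_net l z) \<le> \<delta>" if "z \<in> S" for z
    using norm_triangle_ineq[of "f z - F n z" "F n z - tanh_net l z"] n[rule_format, OF that]
      l[rule_format, OF that]
    by (simp add: dist_norm norm_minus_commute)
  then show "\<exists>l. \<forall>z\<in>S. norm (f z - tanh_net l z) \<le> \<delta>" by blast
qed

text \<open>With \<open>X = e\<^sup>2\<^sup>u\<close>, \<open>Y = e\<^sup>2\<^sup>c\<close> one has \<open>Y (1 + tanh (u - c)) / 2 = XY / (X + Y)\<close>,
  so the error is \<open>X\<^sup>2 / (X + Y) \<le> X\<^sup>2 / Y\<close>, which is small once the shift \<open>c\<close> is large.\<close>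

lemma exp_minus_shifted_tanh_bound:
  fixes u c :: real
  shows "\<bar>exp (2*u) - exp (2*c) * ((1 + tanh (u - c)) / 2)\<bar> \<le> exp (4*u - 2*c)"
proof -
  define X where "X = exp (2*u)"
  define Y where "Y = exp (2*c)"
  have X: "X > 0" and Y: "Y > 0" by (auto simp: X_def Y_def)
  have e: "exp (- 2 * (u - c)) = Y / X"
    by (simp add: X_def Y_def exp_diff[symmetric] algebra_simps)
  have "1 - Y/X = (X - Y) / X" "1 + Y/X = (X + Y) / X"
    using X by (simp_all add: field_simps)
  then have "(1 - Y/X) / (1 + Y/X) = (X - Y) / (X + Y)"
    using X by simp
  then have tanh: "(1 + tanh (u - c)) / 2 = X / (X + Y)"
    unfolding tanh_real_altdef e using X Y by (simp add: field_simps)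
  have "X - Y * (X / (X + Y)) = X * X / (X + Y)"
    using X Y by (simp add: field_simps)
  then have "\<bar>exp (2*u) - exp (2*c) * ((1 + tanh (u - c)) / 2)\<bar> = X * X / (X + Y)"
    unfolding tanh X_def [symmetric] Y_def [symmetric] using X Y by simp
  also have "\<dots> \<le> X * X / Y" using X Y by (intro divide_left_mono) auto
  also have "\<dots> = exp (4*u - 2*c)" by (simp add: X_def Y_def exp_diff exp_add[symmetric])
  finally show ?thesis .
qed

lemma tanh_approximable_exp:
  fixes S :: "'b::euclidean_space set"
  assumes "compact S"
  shows "tanh_approximable S (\<lambda>z. exp (w \<bullet> z))"
  unfolding tanh_approximable_def
proof (intro allI impI)
  fix \<delta> :: real assume \<delta>: "\<delta> > 0"
  obtain B where B: "\<And>z. z \<in> S \<Longrightarrow> norm z \<le> B"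
    using compact_imp_bounded[OF assms] bounded_iff by blast
  define c where "c = norm w * B - ln \<delta> / 2"
  \<comment> \<open>the first neuron has zero weight and contributes the constant \<open>e\<^sup>2\<^sup>c / 2\<close>\<close>
  define l where "l = [(exp (2*c) / 2 / tanh 1, 0::'b, 1::real), (exp (2*c) / 2, (1/2) *\<^sub>R w, - c)]"
  have "norm (exp (w \<bullet> z) - tanh_net l z) \<le> \<delta>" if z: "z \<in> S" for z
  proof -
    define u where "u = (w \<bullet> z) / 2"
    have "w \<bullet> z \<le> norm w * B"
      using Cauchy_Schwarz_ineq2[of w z] mult_left_mono[OF B[OF z] norm_ge_zero[of w]] by linarith
    then have u: "4*u - 2*c \<le> ln \<delta>" unfolding u_def c_def by simp
    have "tanh_net l z = exp (2*c) / 2 + exp (2*c) / 2 * tanh (u - c)"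
      by (simp add: l_def u_def inner_scaleR_left)
    also have "\<dots> = exp (2*c) * ((1 + tanh (u - c)) / 2)"
      by (simp add: field_simps)
    finally have "tanh_net l z = exp (2*c) * ((1 + tanh (u - c)) / 2)" .
    then have "norm (exp (w \<bullet> z) - tanh_net l z) = \<bar>exp (2*u) - exp (2*c) * ((1 + tanh (u - c)) / 2)\<bar>"
      by (simp add: u_def)
    also have "\<dots> \<le> exp (4*u - 2*c)" by (rule exp_minus_shifted_tanh_bound)
    also have "\<dots> \<le> exp (ln \<delta>)" using u by simp
    finally show ?thesis using \<delta> by simp
  qed
  then show "\<exists>l. \<forall>z\<in>S. norm (exp (w \<bullet> z) - tanh_net l z) \<le> \<delta>" by blast
qed

inductive_set exp_span :: "('b::real_inner \<Rightarrow> real) set" where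
  exponential: "(\<lambda>z. exp (w \<bullet> z)) \<in> exp_span"
| add: "f \<in> exp_span \<Longrightarrow> g \<in> exp_span \<Longrightarrow> (\<lambda>z. f z + g z) \<in> exp_span"
| scale: "f \<in> exp_span \<Longrightarrow> (\<lambda>z. c * f z) \<in> exp_span"

lemma exp_span_mult_exp:
  assumes "g \<in> exp_span"
  shows "(\<lambda>z. exp (w \<bullet> z) * g z) \<in> exp_span"
  using assms
proof (induction g rule: exp_span.induct)
  case (exponential w')
  have "(\<lambda>z. exp ((w + w') \<bullet> z)) \<in> exp_span" by (rule exp_span.exponential)
  then show ?case by (simp add: inner_add_left exp_add)
next
  case (add f g)
  then show ?case using exp_span.add[OF add.IH] by (simp add: distrib_left)
next
  case (scale f c)
  then show ?case using exp_span.scale[OF scale.IH, of c] by (simp add: algebra_simps)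
qed

lemma exp_span_mult:
  assumes "f \<in> exp_span" "g \<in> exp_span"
  shows "(\<lambda>z. f z * g z) \<in> exp_span"
  using assms(1)
proof (induction f rule: exp_span.induct)
  case (exponential w)
  then show ?case using exp_span_mult_exp[OF assms(2)] by simp
next
  case (add f h)
  then show ?case using exp_span.add[OF add.IH] by (simp add: distrib_right)
next
  case (scale f c)
  then show ?case using exp_span.scale[OF scale.IH, of c] by (simp add: algebra_simps)
qed

lemma exp_span_const: "(\<lambda>z. c) \<in> exp_span"
  using exp_span.scale[OF exp_span.exponential[of 0], of c] by simp

lemma continuous_on_exp_span: "f \<in> exp_span \<Longrightarrow> continuous_on S f"
  by (induction f rule: exp_span.induct) (auto intro!: continuous_intros)

lemma exp_span_separates:
  assumes "x \<noteq> y"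
  shows "\<exists>f\<in>exp_span. f x \<noteq> f y"
proof
  have "(x - y) \<bullet> x - (x - y) \<bullet> y = (x - y) \<bullet> (x - y)" by (simp add: inner_diff_right)
  also have "\<dots> > 0" using assms by simp
  finally have "(x - y) \<bullet> x \<noteq> (x - y) \<bullet> y" by simp
  then show "exp ((x - y) \<bullet> x) \<noteq> exp ((x - y) \<bullet> y)" by simp
qed (rule exp_span.exponential)

lemma tanh_approximable_exp_span:
  fixes S :: "'b::euclidean_space set"
  shows "f \<in> exp_span \<Longrightarrow> compact S \<Longrightarrow> tanh_approximable S f"
proof (induction f rule: exp_span.induct)
  case (scale f c)
  then show ?case using tanh_approximable_scaleR[of S f c] by (simp add: mult.commute)
qed (auto intro: tanh_approximable_exp tanh_approximable_add)

lemma tanh_approximable_continuous_real: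
  fixes f :: "'b::euclidean_space \<Rightarrow> real"
  assumes S: "compact S" and f: "continuous_on S f"
  shows "tanh_approximable S f"
proof -
  interpret function_ring_on "exp_span :: ('b \<Rightarrow> real) set" S
    using S by unfold_locales
      (auto intro: continuous_on_exp_span exp_span.add exp_span_mult exp_span_const exp_span_separates)
  obtain F where F: "F \<in> UNIV \<rightarrow> exp_span" and lim: "uniform_limit S F f sequentially"
    using Stone_Weierstrass[OF f] by blast
  show ?thesis
  proof (rule tanh_approximable_uniform_limit[OF _ lim])
    fix n
    have "F n \<in> exp_span" using F by blast
    then show "tanh_approximable S (F n)" using S by (rule tanh_approximable_exp_span)
  qed
qed

lemma tanh_approximable_continuous:
  fixes f :: "'b::euclidean_space \<Rightarrow> 'c::euclidean_space"
  assumes S: "compact S" and f: "continuous_on S f"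
  shows "tanh_approximable S f"
proof -
  have "tanh_approximable S (\<lambda>z. \<Sum>e\<in>Basis. (f z \<bullet> e) *\<^sub>R e)"
    using S f by (intro tanh_approximable_sum tanh_approximable_scaleR tanh_approximable_continuous_real
      continuous_on_inner continuous_on_const) simp_all
  then show ?thesis by (simp add: euclidean_representation)
qed

lemma gronwall_inequality:
  fixes u :: "real \<Rightarrow> real"
  assumes "0 \<le> L" and u: "continuous_on {0..T} u"
    and le: "\<And>t. t \<in> {0..T} \<Longrightarrow> u t \<le> C + L * integral {0..t} u"
    and t: "t \<in> {0..T}"
  shows "u t \<le> C * exp (L * t)"
proof -
  define U where "U t = integral {0..t} u" for t
  define W where "W t = exp (- L * t) * (C + L * U t)" for t
  define W' where "W' x = exp (- L * x) * L * (u x - (C + L * U x))" for x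
  have dW: "(W has_real_derivative W' x) (at x within {0..T})" if "x \<in> {0..T}" for x
  proof -
    have "(U has_real_derivative u x) (at x within {0..T})"
      unfolding U_def by (rule integral_has_real_derivative[OF u that])
    then show ?thesis
      unfolding W_def W'_def by (auto intro!: derivative_eq_intros simp: algebra_simps)
  qed
  then have W: "continuous_on {0..T} W"
    unfolding continuous_on_eq_continuous_within by (meson DERIV_continuous)
  have "W t \<le> W 0"
  proof (rule DERIV_nonpos_imp_decreasing_open[of 0 t W])
    show "0 \<le> t" using t by simp
    show "continuous_on {0..t} W" using t by (intro continuous_on_subset[OF W]) auto
    fix x assume "0 < x" "x < t"
    moreover from this have "W' x \<le> 0"
      using le[of x] t \<open>0 \<le> L\<close> unfolding W'_def U_def by (intro mult_nonneg_nonpos) auto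
    ultimately show "\<exists>y. (W has_real_derivative y) (at x) \<and> y \<le> 0"
      using t dW[of x] at_within_Icc_at[of 0 x T] by auto
  qed
  moreover have "U 0 = 0" by (simp add: U_def)
  ultimately have "C + L * U t \<le> C * exp (L * t)"
    by (simp add: W_def exp_minus field_simps)
  then show ?thesis using le[OF t] unfolding U_def by simp
qed

lemma integral_norm_bound_integral_off_finite:
  fixes f :: "real \<Rightarrow> 'a::euclidean_space"
  assumes "f integrable_on S" "g integrable_on S" "finite F"
    and le: "\<And>x. x \<in> S - F \<Longrightarrow> norm (f x) \<le> g x"
  shows "norm (integral S f) \<le> integral S g"
proof -
  define g' where "g' x = (if x \<in> F then norm (f x) else g x)" for x
  have g': "g' integrable_on S"
    by (rule integrable_spike_finite[OF assms(3) _ assms(2)]) (auto simp: g'_def)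
  have "integral S g' = integral S g"
    using assms(3) by (intro integral_spike[where S=F]) (auto simp: g'_def negligible_finite)
  moreover have "norm (integral S f) \<le> integral S g'"
    using assms(1) g' by (rule integral_norm_bound_integral) (auto simp: g'_def le)
  ultimately show ?thesis by simp
qed

lemma has_integral_power_0:
  fixes t c :: real
  assumes "0 \<le> t"
  shows "((\<lambda>r. c * r ^ k) has_integral (c * t ^ Suc k / Suc k)) {0..t}"
proof -
  have "((\<lambda>r. c * r ^ k) has_integral (c * t ^ Suc k / Suc k - c * 0 ^ Suc k / Suc k)) {0..t}"
  proof (rule fundamental_theorem_of_calculus[OF assms])
    fix x assume "x \<in> {0..t}"
    have "((\<lambda>r. c * r ^ Suc k / Suc k) has_real_derivative (c * (Suc k * x ^ k) / Suc k)) (at x within {0..t})"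
      by (rule derivative_eq_intros refl | simp)+
    then show "((\<lambda>r. c * r ^ Suc k / Suc k) has_vector_derivative c * x ^ k) (at x within {0..t})"
      by (simp add: has_real_derivative_iff_has_vector_derivative[symmetric])
  qed
  then show ?thesis by simp
qed

section \<open>Existence of solutions by Picard iteration\<close>

locale bounded_lipschitz_field =
  fixes V :: "'a::euclidean_space \<Rightarrow> real \<Rightarrow> 'a" and T L M :: real
  assumes T_nonneg: "0 \<le> T" and L_nonneg: "0 \<le> L"
    and norm_bounded: "\<And>x r. norm (V x r) \<le> M"
    and lipschitz: "\<And>x y r. norm (V x r - V y r) \<le> L * norm (x - y)"
    and integrable_along: "\<And>y. continuous_on {0..T} y \<Longrightarrow> (\<lambda>r. V (y r) r) integrable_on {0..T}"
begin

definition picard_step :: "'a \<Rightarrow> (real \<Rightarrow> 'a) \<Rightarrow> real \<Rightarrow> 'a" where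
  "picard_step x0 y t = x0 + integral {0..t} (\<lambda>r. V (y r) r)"

abbreviation picard_iterate :: "'a \<Rightarrow> nat \<Rightarrow> real \<Rightarrow> 'a" where
  "picard_iterate x0 n \<equiv> (picard_step x0 ^^ n) (\<lambda>_. x0)"

lemma M_nonneg: "0 \<le> M"
  using norm_bounded[of 0 0] norm_ge_zero order_trans by blast

lemma integrable_along_initial:
  "continuous_on {0..T} y \<Longrightarrow> t \<in> {0..T} \<Longrightarrow> (\<lambda>r. V (y r) r) integrable_on {0..t}"
  using integrable_subinterval_real[OF integrable_along] by fastforce

lemma continuous_on_picard_step:
  "continuous_on {0..T} y \<Longrightarrow> continuous_on {0..T} (picard_step x0 y)"
  unfolding picard_step_def [abs_def]
  by (intro continuous_intros indefinite_integral_continuous_1 integrable_along)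

lemma continuous_on_picard_iterate: "continuous_on {0..T} (picard_iterate x0 n)"
  by (induction n) (auto intro: continuous_on_picard_step)

lemma norm_picard_step_diff_le:
  assumes y: "continuous_on {0..T} y" and z: "continuous_on {0..T} z" and t: "t \<in> {0..T}"
    and g: "g integrable_on {0..t}" and le: "\<And>r. r \<in> {0..t} \<Longrightarrow> L * norm (y r - z r) \<le> g r"
  shows "norm (picard_step x0 y t - picard_step x0 z t) \<le> integral {0..t} g"
proof -
  have "picard_step x0 y t - picard_step x0 z t = integral {0..t} (\<lambda>r. V (y r) r - V (z r) r)"
    unfolding picard_step_def
    using integrable_along_initial[OF y t] integrable_along_initial[OF z t] by (simp add: integral_diff)
  also have "norm \<dots> \<le> integral {0..t} g"
    using integrable_diff[OF integrable_along_initial[OF y t] integrable_along_initial[OF z t]] g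
    by (rule integral_norm_bound_integral) (meson lipschitz le order_trans)
  finally show ?thesis .
qed

lemma norm_picard_iterate_diff_le:
  "t \<in> {0..T} \<Longrightarrow>
    norm (picard_iterate x0 (Suc n) t - picard_iterate x0 n t) \<le> M * L ^ n * t ^ Suc n / fact (Suc n)"
proof (induction n arbitrary: t)
  case 0
  have "norm (integral {0..t} (\<lambda>r. V x0 r)) \<le> integral {0..t} (\<lambda>r. M)"
    using integrable_along_initial[of "\<lambda>_. x0", OF _ 0] norm_bounded
    by (intro integral_norm_bound_integral) auto
  then show ?case using 0 by (simp add: picard_step_def mult.commute)
next
  case (Suc n)
  define c where "c = L * (M * L ^ n / fact (Suc n))"
  have int: "((\<lambda>r. c * r ^ Suc n) has_integral (c * t ^ Suc (Suc n) / Suc (Suc n))) {0..t}"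
    using Suc.prems by (intro has_integral_power_0) auto
  have "norm (picard_step x0 (picard_iterate x0 (Suc n)) t - picard_step x0 (picard_iterate x0 n) t)
      \<le> integral {0..t} (\<lambda>r. c * r ^ Suc n)"
  proof (rule norm_picard_step_diff_le[OF continuous_on_picard_iterate continuous_on_picard_iterate Suc.prems])
    show "(\<lambda>r. c * r ^ Suc n) integrable_on {0..t}" using int by blast
    fix r assume "r \<in> {0..t}"
    then have "norm (picard_iterate x0 (Suc n) r - picard_iterate x0 n r) \<le> M * L ^ n * r ^ Suc n / fact (Suc n)"
      using Suc by auto
    then show "L * norm (picard_iterate x0 (Suc n) r - picard_iterate x0 n r) \<le> c * r ^ Suc n"
      using mult_left_mono[OF _ L_nonneg] by (fastforce simp: c_def)
  qed
  also have "\<dots> = M * L ^ Suc n * t ^ Suc (Suc n) / fact (Suc (Suc n))"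
    using integral_unique[OF int] by (simp add: c_def field_simps)
  finally show ?case by simp
qed

lemma picard_iterate_uniform_limit:
  "\<exists>y. uniform_limit {0..T} (picard_iterate x0) y sequentially"
proof -
  define D where "D i t = picard_iterate x0 (Suc i) t - picard_iterate x0 i t" for i t
  \<comment> \<open>the majorants are the terms of the exponential series for \<open>M T exp (L T)\<close>\<close>
  have "norm (D i t) \<le> M * T * (inverse (fact i) * (L * T) ^ i)" if t: "t \<in> {0..T}" for i t
  proof -
    have "norm (D i t) \<le> M * L ^ i * t ^ Suc i / fact (Suc i)"
      unfolding D_def using norm_picard_iterate_diff_le[OF t] .
    also have "\<dots> \<le> M * L ^ i * T ^ Suc i / fact i"
      using t M_nonneg L_nonneg by (intro frac_le mult_left_mono power_mono fact_mono) auto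
    also have "\<dots> = M * T * (inverse (fact i) * (L * T) ^ i)"
      by (simp add: field_simps power_mult_distrib)
    finally show ?thesis .
  qed
  then have "uniform_limit {0..T} (\<lambda>n t. \<Sum>i<n. D i t) (\<lambda>t. \<Sum>i. D i t) sequentially"
    by (intro Weierstrass_m_test[of _ _ "\<lambda>i. M * T * (inverse (fact i) * (L * T) ^ i)"])
      (auto intro: summable_mult summable_exp)
  moreover have "(\<Sum>i<n. D i t) = picard_iterate x0 n t - x0" for n t
    using sum_lessThan_telescope[of "\<lambda>i. picard_iterate x0 i t" n] unfolding D_def by simp
  ultimately have "uniform_limit {0..T} (picard_iterate x0) (\<lambda>t. x0 + (\<Sum>i. D i t)) sequentially"
    by (simp add: uniform_limit_iff dist_norm algebra_simps)
  then show ?thesis by blast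
qed

lemma picard_step_tendsto:
  assumes lim: "uniform_limit {0..T} Y y sequentially"
    and Y: "\<And>n. continuous_on {0..T} (Y n)" and y: "continuous_on {0..T} y" and t: "t \<in> {0..T}"
  shows "(\<lambda>n. picard_step x0 (Y n) t) \<longlonglongrightarrow> picard_step x0 y t"
proof (rule tendstoI)
  fix e :: real assume "e > 0"
  define e' where "e' = e / (L * T + 1)"
  have LT: "L * T + 1 > 0" using L_nonneg T_nonneg by (simp add: add_nonneg_pos)
  then have e': "e' > 0" using \<open>e > 0\<close> by (simp add: e'_def)
  have "\<forall>\<^sub>F n in sequentially. \<forall>r\<in>{0..T}. dist (Y n r) (y r) < e'"
    using lim e' unfolding uniform_limit_iff by blast
  then show "\<forall>\<^sub>F n in sequentially. dist (picard_step x0 (Y n) t) (picard_step x0 y t) < e"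
  proof eventually_elim
    case (elim n)
    have "norm (picard_step x0 (Y n) t - picard_step x0 y t) \<le> integral {0..t} (\<lambda>r. L * e')"
    proof (rule norm_picard_step_diff_le[OF Y y t])
      fix r assume "r \<in> {0..t}"
      then have "norm (Y n r - y r) \<le> e'" using elim t by (auto simp: dist_norm less_imp_le)
      then show "L * norm (Y n r - y r) \<le> L * e'" using L_nonneg by (rule mult_left_mono)
    qed (rule integrable_const_ivl)
    also have "\<dots> = t * (L * e')" using t by simp
    also have "\<dots> \<le> T * (L * e')" using t L_nonneg e' by (intro mult_right_mono) auto
    also have "\<dots> < e"
      using LT \<open>e > 0\<close> by (simp add: e'_def field_simps)
    finally show ?case by (simp add: dist_norm)
  qed
qed

theorem integral_solution_exists:
  "\<exists>y. continuous_on {0..T} y \<and> (\<forall>t\<in>{0..T}. ((\<lambda>s. V (y s) s) has_integral (y t - x0)) {0..t})"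
proof -
  obtain y where lim: "uniform_limit {0..T} (picard_iterate x0) y sequentially"
    using picard_iterate_uniform_limit by blast
  have y: "continuous_on {0..T} y"
    by (rule uniform_limit_theorem[OF _ lim]) (simp_all add: continuous_on_picard_iterate)
  have "y t = picard_step x0 y t" if t: "t \<in> {0..T}" for t
  proof (rule LIMSEQ_unique)
    show "(\<lambda>n. picard_iterate x0 (Suc n) t) \<longlonglongrightarrow> y t"
      using LIMSEQ_Suc[OF tendsto_uniform_limitI[OF lim t]] .
    show "(\<lambda>n. picard_iterate x0 (Suc n) t) \<longlonglongrightarrow> picard_step x0 y t"
      using picard_step_tendsto[OF lim continuous_on_picard_iterate y t] by simp
  qed
  then have "((\<lambda>s. V (y s) s) has_integral (y t - x0)) {0..t}" if "t \<in> {0..T}" for t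
    using integrable_along_initial[OF y that] that by (simp add: picard_step_def has_integral_iff)
  with y show ?thesis by blast
qed

end


section \<open>Estimates for flows\<close>

lemma is_flowD:
  assumes "is_flow \<tau> v \<phi>"
  shows "continuous_on {0..\<tau>} (\<lambda>t. \<phi> t x0)"
    and "t \<in> {0..\<tau>} \<Longrightarrow> ((\<lambda>s. v (\<phi> s x0) s) has_integral (\<phi> t x0 - x0)) {0..t}"
  using assms unfolding is_flow_def by blast+

lemma flow_norm_bound:
  fixes v :: "'a::euclidean_space \<Rightarrow> real \<Rightarrow> 'a"
  assumes flow: "is_flow \<tau> v \<phi>" and K: "finite K" and "0 \<le> L" "0 \<le> B"
    and lip: "\<And>x y r. r \<in> {0<..<\<tau>} - K \<Longrightarrow> norm (v x r - v y r) \<le> L * norm (x - y)"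
    and bnd: "\<And>r. r \<in> {0<..<\<tau>} - K \<Longrightarrow> norm (v 0 r) \<le> B"
    and t: "t \<in> {0..\<tau>}"
  shows "norm (\<phi> t x0) \<le> (norm x0 + B * \<tau>) * exp (L * \<tau>)"
proof -
  define u where "u t = norm (\<phi> t x0)" for t
  have u: "continuous_on {0..\<tau>} u"
    unfolding u_def by (intro continuous_intros is_flowD(1)[OF flow])
  have "u t \<le> (norm x0 + B * \<tau>) + L * integral {0..t} u" if t: "t \<in> {0..\<tau>}" for t
  proof -
    have ui: "(\<lambda>r. L * u r) integrable_on {0..t}"
      using t by (intro integrable_continuous_interval continuous_intros continuous_on_subset[OF u]) auto
    have "norm (integral {0..t} (\<lambda>s. v (\<phi> s x0) s)) \<le> integral {0..t} (\<lambda>r. B + L * u r)"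
    proof (rule integral_norm_bound_integral_off_finite[of _ _ _ "insert 0 (insert \<tau> K)"])
      show "(\<lambda>s. v (\<phi> s x0) s) integrable_on {0..t}" using is_flowD(2)[OF flow t] by blast
      show "(\<lambda>r. B + L * u r) integrable_on {0..t}" using ui by (intro integrable_add integrable_const_ivl)
      fix r assume "r \<in> {0..t} - insert 0 (insert \<tau> K)"
      then have r: "r \<in> {0<..<\<tau>} - K" using t by auto
      have "norm (v (\<phi> r x0) r) \<le> norm (v 0 r) + norm (v (\<phi> r x0) r - v 0 r)"
        by (rule norm_triangle_sub)
      also have "\<dots> \<le> B + L * u r"
        using bnd[OF r] lip[OF r, of "\<phi> r x0" 0] by (simp add: u_def)
      finally show "norm (v (\<phi> r x0) r) \<le> B + L * u r" .
    qed (use K in auto)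
    also have "\<dots> = B * t + L * integral {0..t} u"
      using t by (simp add: integral_add[OF integrable_const_ivl ui] integral_mult_right)
    also have "\<dots> \<le> B * \<tau> + L * integral {0..t} u"
      using t \<open>0 \<le> B\<close> by (simp add: mult_left_mono)
    finally show ?thesis
      using norm_triangle_ineq[of x0 "integral {0..t} (\<lambda>s. v (\<phi> s x0) s)"]
        integral_unique[OF is_flowD(2)[OF flow t]] by (simp add: u_def)
  qed
  then have "u t \<le> (norm x0 + B * \<tau>) * exp (L * t)"
    using gronwall_inequality[OF \<open>0 \<le> L\<close> u _ t] by blast
  also have "\<dots> \<le> (norm x0 + B * \<tau>) * exp (L * \<tau>)"
    using t \<open>0 \<le> L\<close> \<open>0 \<le> B\<close> by (intro mult_left_mono) (auto intro: mult_left_mono)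
  finally show ?thesis by (simp add: u_def)
qed


lemma continuous_on_first_exit_induct:
  fixes u :: "real \<Rightarrow> real"
  assumes u: "continuous_on {0..\<tau>} u"
    and step: "\<And>t1. t1 \<in> {0..\<tau>} \<Longrightarrow> (\<And>r. r \<in> {0..<t1} \<Longrightarrow> u r < \<epsilon>) \<Longrightarrow> u t1 < \<epsilon>"
    and t: "t \<in> {0..\<tau>}"
  shows "u t < \<epsilon>"
proof (rule ccontr)
  define S where "S = {0..\<tau>} \<inter> u -` {\<epsilon>..}"
  assume "\<not> u t < \<epsilon>"
  then have "t \<in> S" using t by (simp add: S_def)
  moreover have "closed S" unfolding S_def by (rule continuous_closed_preimage[OF u]) auto
  moreover have bdd: "bdd_below S" unfolding S_def by (rule bdd_belowI[of _ 0]) auto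
  ultimately have "Inf S \<in> S" using closed_contains_Inf by blast
  moreover have "u r < \<epsilon>" if "r \<in> {0..<Inf S}" for r
  proof (rule ccontr)
    assume "\<not> u r < \<epsilon>"
    with that \<open>Inf S \<in> S\<close> have "r \<in> S" by (auto simp: S_def)
    then have "Inf S \<le> r" using bdd by (rule cInf_lower)
    then show False using that by auto
  qed
  ultimately show False using step[of "Inf S"] by (auto simp: S_def)
qed

lemma flow_difference_integral_bound:
  fixes v w :: "'a::euclidean_space \<Rightarrow> real \<Rightarrow> 'a"
  assumes flow: "is_flow \<tau> v \<phi>" and flow': "is_flow \<tau> w \<psi>" and K: "finite K"
    and "0 \<le> \<delta>"
    and lip: "\<And>x y r. r \<in> {0<..<\<tau>} - K \<Longrightarrow> norm (v x r - v y r) \<le> L * norm (x - y)"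
    and close: "\<And>x r. r \<in> {0<..<\<tau>} - K \<Longrightarrow> norm x \<le> R + \<epsilon> \<Longrightarrow> norm (v x r - w x r) \<le> \<delta>"
    and bounded: "\<And>t. t \<in> {0..\<tau>} \<Longrightarrow> norm (\<phi> t x0) \<le> R"
    and t1: "t1 \<le> \<tau>" and before: "\<And>r. r \<in> {0..<t1} \<Longrightarrow> norm (\<phi> r x0 - \<psi> r x0) < \<epsilon>"
    and s: "s \<in> {0..t1}"
  shows "norm (\<phi> s x0 - \<psi> s x0) \<le> \<delta> * \<tau> + L * integral {0..s} (\<lambda>r. norm (\<phi> r x0 - \<psi> r x0))"
proof -
  define u where "u t = norm (\<phi> t x0 - \<psi> t x0)" for t
  have s': "s \<in> {0..\<tau>}" using s t1 by auto
  have ui: "(\<lambda>r. L * u r) integrable_on {0..s}"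
    using s' unfolding u_def
    by (intro integrable_continuous_interval continuous_intros
        continuous_on_subset[OF is_flowD(1)[OF flow]] continuous_on_subset[OF is_flowD(1)[OF flow']]) auto
  have diff: "((\<lambda>r. v (\<phi> r x0) r - w (\<psi> r x0) r) has_integral (\<phi> s x0 - \<psi> s x0)) {0..s}"
    using has_integral_diff[OF is_flowD(2)[OF flow s', of x0] is_flowD(2)[OF flow' s', of x0]] by simp
  have "u s = norm (integral {0..s} (\<lambda>r. v (\<phi> r x0) r - w (\<psi> r x0) r))"
    unfolding u_def integral_unique[OF diff] ..
  also have "\<dots> \<le> integral {0..s} (\<lambda>r. L * u r + \<delta>)"
  proof (rule integral_norm_bound_integral_off_finite[of _ _ _ "insert 0 (insert t1 (insert \<tau> K))"])
    show "(\<lambda>r. v (\<phi> r x0) r - w (\<psi> r x0) r) integrable_on {0..s}" using diff by blast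
    show "(\<lambda>r. L * u r + \<delta>) integrable_on {0..s}" using ui by (intro integrable_add integrable_const_ivl)
    fix r assume "r \<in> {0..s} - insert 0 (insert t1 (insert \<tau> K))"
    then have r: "r \<in> {0<..<\<tau>} - K" and "r \<in> {0..<t1}" using s t1 by auto
    then have "norm (\<psi> r x0) \<le> R + \<epsilon>"
      using bounded[of r] before[of r] norm_triangle_sub[of "\<psi> r x0" "\<phi> r x0"]
      by (auto simp: norm_minus_commute)
    then have "norm (v (\<phi> r x0) r - w (\<psi> r x0) r)
        \<le> norm (v (\<phi> r x0) r - v (\<psi> r x0) r) + norm (v (\<psi> r x0) r - w (\<psi> r x0) r)"
      by (metis diff_add_cancel add_diff_eq norm_triangle_ineq)
    also have "\<dots> \<le> L * u r + \<delta>"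
      using lip[OF r] close[OF r] \<open>norm (\<psi> r x0) \<le> R + \<epsilon>\<close> by (intro add_mono) (auto simp: u_def)
    finally show "norm (v (\<phi> r x0) r - w (\<psi> r x0) r) \<le> L * u r + \<delta>" .
  qed (use K in auto)
  also have "\<dots> = L * integral {0..s} u + \<delta> * s"
    using s' by (simp add: integral_add[OF ui integrable_const_ivl] integral_mult_right mult.commute)
  also have "\<dots> \<le> \<delta> * \<tau> + L * integral {0..s} u"
    using s' \<open>0 \<le> \<delta>\<close> by (simp add: mult_left_mono)
  finally show ?thesis by (simp add: u_def [abs_def])
qed

lemma flow_perturbation:
  fixes v w :: "'a::euclidean_space \<Rightarrow> real \<Rightarrow> 'a"
  assumes flow: "is_flow \<tau> v \<phi>" and flow': "is_flow \<tau> w \<psi>" and K: "finite K"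
    and "0 \<le> L" "0 \<le> \<delta>"
    and lip: "\<And>x y r. r \<in> {0<..<\<tau>} - K \<Longrightarrow> norm (v x r - v y r) \<le> L * norm (x - y)"
    and close: "\<And>x r. r \<in> {0<..<\<tau>} - K \<Longrightarrow> norm x \<le> R + \<epsilon> \<Longrightarrow> norm (v x r - w x r) \<le> \<delta>"
    and bounded: "\<And>t. t \<in> {0..\<tau>} \<Longrightarrow> norm (\<phi> t x0) \<le> R"
    and small: "\<delta> * \<tau> * exp (L * \<tau>) < \<epsilon>"
    and t: "t \<in> {0..\<tau>}"
  shows "norm (\<phi> t x0 - \<psi> t x0) < \<epsilon>"
proof -
  define u where "u t = norm (\<phi> t x0 - \<psi> t x0)" for t
  have u: "continuous_on {0..\<tau>} u"
    unfolding u_def by (intro continuous_intros is_flowD(1)[OF flow] is_flowD(1)[OF flow'])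
  have "u t1 < \<epsilon>" if t1: "t1 \<in> {0..\<tau>}" and before: "\<And>r. r \<in> {0..<t1} \<Longrightarrow> u r < \<epsilon>" for t1
  proof -
    have "u t1 \<le> \<delta> * \<tau> * exp (L * t1)"
      using t1 flow_difference_integral_bound[OF flow flow' K \<open>0 \<le> \<delta>\<close> lip close bounded _ before[unfolded u_def]]
      by (intro gronwall_inequality[OF \<open>0 \<le> L\<close> continuous_on_subset[OF u]]) (auto simp: u_def [abs_def])
    also have "\<dots> \<le> \<delta> * \<tau> * exp (L * \<tau>)"
      using t1 \<open>0 \<le> L\<close> \<open>0 \<le> \<delta>\<close> by (intro mult_left_mono) (auto intro: mult_left_mono)
    finally show ?thesis using small by simp
  qed
  from continuous_on_first_exit_induct[OF u this t] show ?thesis by (simp add: u_def)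
qed


lemma smooth_on_affine:
  fixes u z :: "'b::real_normed_vector"
  assumes "\<And>r. r \<in> S \<Longrightarrow> f r = r *\<^sub>R u + z"
  shows "smooth_on S f"
proof -
  define D :: "nat \<Rightarrow> real \<Rightarrow> 'b" where
    "D n = (if n = 0 then (\<lambda>r. r *\<^sub>R u + z) else if n = 1 then (\<lambda>_. u) else (\<lambda>_. 0))" for n
  have "(D n has_vector_derivative D (Suc n) t) (at t)" for n t
    by (cases "n = 0"; cases "n = 1") (auto simp: D_def intro!: derivative_eq_intros)
  moreover have "D 0 t = f t" if "t \<in> S" for t
    using assms[OF that] by (simp add: D_def)
  ultimately show ?thesis unfolding smooth_on_def by blast
qed

definition piece_start :: "real set \<Rightarrow> real \<Rightarrow> real" where
  "piece_start K r = Max (insert 0 {k\<in>K. k < r})"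

definition piece_end :: "real \<Rightarrow> real set \<Rightarrow> real \<Rightarrow> real" where
  "piece_end \<tau> K s = Min (insert \<tau> {k\<in>K. s < k})"

locale breakpoints =
  fixes \<tau> :: real and K :: "real set"
  assumes tau_pos: "0 < \<tau>" and finite_K: "finite K" and K_subset: "K \<subseteq> {0<..<\<tau>}"
begin

lemma piece_start_mem: "piece_start K r \<in> insert 0 K"
  unfolding piece_start_def using Max_in[of "insert 0 {k\<in>K. k < r}"] finite_K by auto

lemma consecutive_piece_end:
  assumes s: "s \<in> insert 0 K"
  shows "consecutive \<tau> K s (piece_end \<tau> K s)"
proof -
  have fin: "finite (insert \<tau> {k\<in>K. s < k})" using finite_K by auto
  have mem: "piece_end \<tau> K s \<in> insert \<tau> {k\<in>K. s < k}"
    unfolding piece_end_def using Min_in[OF fin] by auto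
  have "s < \<tau>" using s K_subset tau_pos by auto
  then have "s < piece_end \<tau> K s" using mem by auto
  moreover have "k \<notin> {s<..<piece_end \<tau> K s}" if "k \<in> K" for k
    using that Min_le[OF fin, of k] by (auto simp: piece_end_def)
  ultimately show ?thesis using s mem unfolding consecutive_def by auto
qed

lemma piece_start_eq:
  assumes c: "consecutive \<tau> K s t" and r: "r \<in> {s<..<t}"
  shows "piece_start K r = s"
proof -
  have s: "s \<in> insert 0 K" "{s<..<t} \<inter> K = {}" "t \<le> \<tau>"
    using c K_subset tau_pos unfolding consecutive_def by auto
  have "0 \<le> s" using s(1) K_subset by auto
  have "k \<le> s" if "k \<in> insert 0 {k\<in>K. k < r}" for k
    using that \<open>0 \<le> s\<close> s(2) r by (force simp: disjoint_iff not_le)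
  then show ?thesis
    unfolding piece_start_def using finite_K s r by (intro Max_eqI) auto
qed

lemma mem_piece:
  assumes r: "r \<in> {0<..<\<tau>} - K"
  shows "r \<in> {piece_start K r<..<piece_end \<tau> K (piece_start K r)}"
proof -
  let ?s = "piece_start K r"
  have fin: "finite (insert 0 {k\<in>K. k < r})" using finite_K by auto
  have "?s \<in> insert 0 {k\<in>K. k < r}" unfolding piece_start_def using Max_in[OF fin] by auto
  then have "?s < r" using r by auto
  moreover have "r < piece_end \<tau> K ?s"
  proof (rule ccontr)
    assume "\<not> r < piece_end \<tau> K ?s"
    moreover have "piece_end \<tau> K ?s \<in> insert \<tau> K"
      unfolding piece_end_def using Min_in[of "insert \<tau> {k\<in>K. ?s < k}"] finite_K by auto
    ultimately have "piece_end \<tau> K ?s \<in> insert 0 {k\<in>K. k < r}" using r by auto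
    then have "piece_end \<tau> K ?s \<le> ?s" unfolding piece_start_def by (rule Max_ge[OF fin])
    then show False using consecutive_piece_end[OF piece_start_mem, of r] by (simp add: consecutive_def)
  qed
  ultimately show ?thesis by simp
qed

lemma piecewise_smooth_fun_piecewise_affine:
  fixes c d :: "real \<Rightarrow> 'b::real_normed_vector"
  shows "piecewise_smooth_fun \<tau> (\<lambda>r. r *\<^sub>R d (piece_start K r) + c (piece_start K r))"
  unfolding piecewise_smooth_fun_def
proof (intro exI[of _ K] conjI allI impI)
  fix s t assume st: "consecutive \<tau> K s t"
  then show "smooth_on {s<..<t} (\<lambda>r. r *\<^sub>R d (piece_start K r) + c (piece_start K r))"
    by (intro smooth_on_affine) (simp add: piece_start_eq)
  show "\<exists>g. continuous_on {s..t} g \<and> (\<forall>r\<in>{s<..<t}. g r = r *\<^sub>R d (piece_start K r) + c (piece_start K r))"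
    using st by (intro exI[of _ "\<lambda>r. r *\<^sub>R d s + c s"]) (auto intro!: continuous_intros simp: piece_start_eq)
qed (use finite_K K_subset in auto)

end


lemma tanh_net_eq_sum_neurons:
  fixes l :: "('c::real_vector \<times> 'b::real_inner \<times> real) list"
  assumes "length l \<le> N"
  shows "tanh_net l z = (\<Sum>i<N. case nth_default (0, 0, 0) l i of (a, w, b) \<Rightarrow> tanh (w \<bullet> z + b) *\<^sub>R a)"
proof -
  define f where "f = (\<lambda>(a, w, b). tanh (w \<bullet> z + b) *\<^sub>R (a::'c))"
  have "tanh_net l z = (\<Sum>i<length l. f (l ! i))"
    unfolding tanh_net_def f_def by (simp add: sum_list_sum_nth atLeast0LessThan)
  also have "\<dots> = (\<Sum>i<N. f (nth_default (0, 0, 0) l i))"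
    using assms by (intro sum.mono_neutral_cong_left) (auto simp: nth_default_def f_def)
  finally show ?thesis by (simp add: f_def)
qed

lemma integrable_bounded_continuous_off_finite:
  fixes f :: "real \<Rightarrow> 'a::euclidean_space"
  assumes K: "finite K" and f: "continuous_on ({a<..<b} - K) f" and bnd: "\<And>t. norm (f t) \<le> M"
  shows "f integrable_on {a..b}"
proof -
  define S where "S = {a<..<b} - K"
  have "bounded S" by (rule bounded_subset[of "{a..b}"]) (auto simp: S_def)
  moreover have "open S" unfolding S_def using K by (intro open_Diff finite_imp_closed) auto
  ultimately have S: "S \<in> lmeasurable" by (rule lmeasurable_open)
  have "f integrable_on S"
    by (rule measurable_bounded_by_integrable_imp_integrable[OF
          continuous_imp_measurable_on_sets_lebesgue[OF f[folded S_def]] integrable_on_const[OF S]])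
      (use bnd S in \<open>auto intro: fmeasurableD\<close>)
  then show ?thesis
  proof (rule integrable_spike_set)
    show "negligible {x \<in> S - {a..b}. f x \<noteq> 0}"
      by (rule negligible_subset[of "{}"]) (auto simp: S_def)
    have "finite (insert a (insert b K))" using K by simp
    then show "negligible {x \<in> {a..b} - S. f x \<noteq> 0}"
      by (rule negligible_subset[OF negligible_finite]) (auto simp: S_def)
  qed
qed

text \<open>The networks take \<open>(x, t)\<close> as input, so the time weight becomes part of a bias that is
  affine in \<open>t\<close>; this is why the parameters are piecewise affine rather than piecewise constant.\<close>

definition piecewise_net :: "real set \<Rightarrow> (real \<Rightarrow> ('a::real_inner \<times> ('a \<times> real) \<times> real) list) \<Rightarrow> 'a \<Rightarrow> real \<Rightarrow> 'a" where
  "piecewise_net K Ls x r = tanh_net (Ls (piece_start K r)) (x, r)"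

context breakpoints
begin

lemma piecewise_net_neuron_form:
  fixes Ls :: "real \<Rightarrow> ('a::real_inner \<times> ('a \<times> real) \<times> real) list"
  obtains N :: nat and a w :: "nat \<Rightarrow> real \<Rightarrow> 'a" and b :: "nat \<Rightarrow> real \<Rightarrow> real"
  where "0 < N"
    and "\<And>i. piecewise_smooth_fun \<tau> (a i) \<and> piecewise_smooth_fun \<tau> (w i) \<and> piecewise_smooth_fun \<tau> (b i)"
    and "piecewise_net K Ls = (\<lambda>x r. \<Sum>i=1..N. tanh (w i r \<bullet> x + b i r) *\<^sub>R a i r)"
proof -
  define N where "N = Suc (\<Sum>s\<in>insert 0 K. length (Ls s))"
  define e where "e i s = nth_default (0, 0, 0) (Ls s) (i - 1)" for i s
  define a where "a i r = fst (e i (piece_start K r))" for i r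
  define w where "w i r = fst (fst (snd (e i (piece_start K r))))" for i r
  define b where "b i r = r * snd (fst (snd (e i (piece_start K r)))) + snd (snd (e i (piece_start K r)))" for i r
  have smooth: "piecewise_smooth_fun \<tau> (a i) \<and> piecewise_smooth_fun \<tau> (w i) \<and> piecewise_smooth_fun \<tau> (b i)" for i
  proof (intro conjI)
    show "piecewise_smooth_fun \<tau> (a i)"
      using piecewise_smooth_fun_piecewise_affine[of "\<lambda>_. 0" "\<lambda>s. fst (e i s)"] by (simp add: a_def [abs_def])
    show "piecewise_smooth_fun \<tau> (w i)"
      using piecewise_smooth_fun_piecewise_affine[of "\<lambda>_. 0" "\<lambda>s. fst (fst (snd (e i s)))"]
      by (simp add: w_def [abs_def])
    show "piecewise_smooth_fun \<tau> (b i)"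
      using piecewise_smooth_fun_piecewise_affine[of "\<lambda>s. snd (fst (snd (e i s)))" "\<lambda>s. snd (snd (e i s))"]
      by (simp add: b_def [abs_def])
  qed
  have neurons: "piecewise_net K Ls x r = (\<Sum>i=1..N. tanh (w i r \<bullet> x + b i r) *\<^sub>R a i r)" for x r
  proof -
    have "length (Ls (piece_start K r)) \<le> N"
      using member_le_sum[where f = "\<lambda>s. length (Ls s)", OF piece_start_mem[of r]] finite_K
      by (simp add: N_def le_SucI)
    then have "piecewise_net K Ls x r =
        (\<Sum>k<N. case e (Suc k) (piece_start K r) of (a, w, b) \<Rightarrow> tanh (w \<bullet> (x, r) + b) *\<^sub>R a)"
      unfolding piecewise_net_def e_def by (simp add: tanh_net_eq_sum_neurons)
    also have "\<dots> = (\<Sum>i=1..N. tanh (w i r \<bullet> x + b i r) *\<^sub>R a i r)"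
      unfolding a_def w_def b_def by (simp add: sum.atLeast1_atMost_eq case_prod_beta inner_prod_def mult.commute add.assoc)
    finally show ?thesis .
  qed
  show thesis
    using that[of N a w b] smooth neurons by (simp add: N_def fun_eq_iff)
qed

lemma norm_piecewise_net_le:
  "norm (piecewise_net K Ls x r) \<le> (\<Sum>s\<in>insert 0 K. tanh_net_amplitude (Ls s))"
proof -
  have "norm (piecewise_net K Ls x r) \<le> tanh_net_amplitude (Ls (piece_start K r))"
    unfolding piecewise_net_def by (rule norm_tanh_net_le)
  also have "\<dots> \<le> (\<Sum>s\<in>insert 0 K. tanh_net_amplitude (Ls s))"
    using finite_K piece_start_mem order_trans[OF norm_ge_zero norm_tanh_net_le]
    by (intro member_le_sum) auto
  finally show ?thesis .
qed

lemma piecewise_net_lipschitz: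
  "norm (piecewise_net K Ls x r - piecewise_net K Ls y r)
    \<le> (\<Sum>s\<in>insert 0 K. tanh_net_lipschitz_const (Ls s)) * norm (x - y)"
proof -
  have "norm (piecewise_net K Ls x r - piecewise_net K Ls y r)
      \<le> tanh_net_lipschitz_const (Ls (piece_start K r)) * norm (x - y)"
    using tanh_net_lipschitz[of "Ls (piece_start K r)" "(x, r)" "(y, r)"]
    by (simp add: piecewise_net_def norm_Pair)
  also have "\<dots> \<le> (\<Sum>s\<in>insert 0 K. tanh_net_lipschitz_const (Ls s)) * norm (x - y)"
    using finite_K piece_start_mem
    by (intro mult_right_mono member_le_sum tanh_net_lipschitz_const_nonneg) auto
  finally show ?thesis .
qed

lemma continuous_on_piecewise_net_along:
  fixes Ls :: "real \<Rightarrow> ('a::euclidean_space \<times> ('a \<times> real) \<times> real) list"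
  assumes y: "continuous_on {0..\<tau>} y"
  shows "continuous_on ({0<..<\<tau>} - K) (\<lambda>r. piecewise_net K Ls (y r) r)"
proof (rule continuous_at_imp_continuous_on, rule ballI)
  fix r assume r: "r \<in> {0<..<\<tau>} - K"
  define s where "s = piece_start K r"
  have "isCont y r" using continuous_on_interior[OF y, of r] r by auto
  then have "isCont (\<lambda>r. (y r, r)) r" by (intro continuous_intros)
  moreover have "isCont (tanh_net (Ls s)) (y r, r)"
    using continuous_on_tanh_net[of "Ls s"] by (simp add: continuous_on_eq_continuous_at)
  ultimately have "isCont (\<lambda>r. tanh_net (Ls s) (y r, r)) r" by (rule isCont_o2)
  then have "continuous (at r within UNIV) (\<lambda>r. piecewise_net K Ls (y r) r)"
  proof (rule continuous_transform_within_openin[where S = "{s<..<piece_end \<tau> K s}"])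
    show "r \<in> {s<..<piece_end \<tau> K s}" using mem_piece[OF r] by (simp add: s_def)
    show "tanh_net (Ls s) (y r', r') = piecewise_net K Ls (y r') r'" if "r' \<in> {s<..<piece_end \<tau> K s}" for r'
      using piece_start_eq[OF consecutive_piece_end[OF piece_start_mem] that[unfolded s_def]]
      by (simp add: s_def piecewise_net_def)
    show "openin (top_of_set UNIV) {s<..<piece_end \<tau> K s}" by simp
  qed
  then show "isCont (\<lambda>r. piecewise_net K Ls (y r) r) r" by simp
qed

lemma piecewise_net_flow_exists:
  fixes Ls :: "real \<Rightarrow> ('a::euclidean_space \<times> ('a \<times> real) \<times> real) list"
  shows "\<exists>\<psi>. is_flow \<tau> (piecewise_net K Ls) \<psi>"
proof -
  interpret bounded_lipschitz_field "piecewise_net K Ls" \<tau>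
    "\<Sum>s\<in>insert 0 K. tanh_net_lipschitz_const (Ls s)" "\<Sum>s\<in>insert 0 K. tanh_net_amplitude (Ls s)"
  proof
    show "0 \<le> \<tau>" using tau_pos by simp
    show "norm (piecewise_net K Ls x r) \<le> (\<Sum>s\<in>insert 0 K. tanh_net_amplitude (Ls s))" for x r
      by (rule norm_piecewise_net_le)
    show "norm (piecewise_net K Ls x r - piecewise_net K Ls y r)
        \<le> (\<Sum>s\<in>insert 0 K. tanh_net_lipschitz_const (Ls s)) * norm (x - y)" for x y r
      by (rule piecewise_net_lipschitz)
    show "0 \<le> (\<Sum>s\<in>insert 0 K. tanh_net_lipschitz_const (Ls s))"
      by (intro sum_nonneg tanh_net_lipschitz_const_nonneg)
    show "(\<lambda>r. piecewise_net K Ls (y r) r) integrable_on {0..\<tau>}" if "continuous_on {0..\<tau>} y" for y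
      using finite_K continuous_on_piecewise_net_along[OF that] norm_piecewise_net_le
      by (rule integrable_bounded_continuous_off_finite)
  qed
  have "\<forall>x0. \<exists>y. continuous_on {0..\<tau>} y \<and>
      (\<forall>t\<in>{0..\<tau>}. ((\<lambda>s. piecewise_net K Ls (y s) s) has_integral (y t - x0)) {0..t})"
    using integral_solution_exists by blast
  then obtain Y where "\<And>x0. continuous_on {0..\<tau>} (Y x0)"
    "\<And>x0 t. t \<in> {0..\<tau>} \<Longrightarrow> ((\<lambda>s. piecewise_net K Ls (Y x0 s) s) has_integral (Y x0 t - x0)) {0..t}"
    by metis
  then have "is_flow \<tau> (piecewise_net K Ls) (\<lambda>t x0. Y x0 t)"
    unfolding is_flow_def by blast
  then show ?thesis by blast
qed

end


definition extends_continuously_on_pieces ::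
    "real \<Rightarrow> real set \<Rightarrow> ('a::topological_space \<Rightarrow> real \<Rightarrow> 'b::topological_space) \<Rightarrow> bool" where
  "extends_continuously_on_pieces \<tau> K v \<longleftrightarrow>
    (\<forall>s t. consecutive \<tau> K s t \<longrightarrow>
      (\<exists>g. continuous_on (UNIV \<times> {s..t}) (\<lambda>(x, r). g x r) \<and> (\<forall>x. \<forall>r\<in>{s<..<t}. g x r = v x r)))"

lemma standing_assumptionE:
  assumes "standing_assumption \<tau> v" "0 < \<tau>"
  obtains L K where "0 \<le> L" "breakpoints \<tau> K"
    "\<And>x y r. r \<in> {0<..<\<tau>} - K \<Longrightarrow> norm (v x r - v y r) \<le> L * norm (x - y)"
    "extends_continuously_on_pieces \<tau> K v"
proof -
  obtain L K where lip: "\<forall>t\<in>{0<..<\<tau>}. \<forall>x y. norm (v x t - v y t) \<le> L * norm (x - y)"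
    and K: "finite K" "K \<subseteq> {0<..<\<tau>}"
    and ext: "\<And>s t. consecutive \<tau> K s t \<Longrightarrow>
      \<exists>g. continuous_on (UNIV \<times> {s..t}) (\<lambda>(x, r). g x r) \<and> (\<forall>x. \<forall>r\<in>{s<..<t}. g x r = v x r)"
    using assms(1) unfolding standing_assumption_def by metis
  have lip': "norm (v x r - v y r) \<le> max L 0 * norm (x - y)" if "r \<in> {0<..<\<tau>} - K" for x y r
    using lip that by (meson DiffD1 max.cobounded1 mult_right_mono norm_ge_zero order_trans)
  have bp: "breakpoints \<tau> K" using assms(2) K by unfold_locales
  have ext': "extends_continuously_on_pieces \<tau> K v"
    using ext unfolding extends_continuously_on_pieces_def by blast
  show thesis by (rule that[OF _ bp lip' ext']) simp
qed

context breakpoints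
begin

lemma piece_extensions:
  assumes "extends_continuously_on_pieces \<tau> K v"
  obtains G where "\<And>s. s \<in> insert 0 K \<Longrightarrow> continuous_on (UNIV \<times> {s..piece_end \<tau> K s}) (G s)"
    and "\<And>x r. r \<in> {0<..<\<tau>} - K \<Longrightarrow> v x r = G (piece_start K r) (x, r)"
proof -
  have "\<exists>g. continuous_on (UNIV \<times> {s..piece_end \<tau> K s}) (\<lambda>(x, r). g x r) \<and>
      (\<forall>x. \<forall>r\<in>{s<..<piece_end \<tau> K s}. g x r = v x r)" if "s \<in> insert 0 K" for s
    using assms consecutive_piece_end[OF that] unfolding extends_continuously_on_pieces_def by blast
  then obtain g where g: "\<And>s. s \<in> insert 0 K \<Longrightarrow> continuous_on (UNIV \<times> {s..piece_end \<tau> K s}) (\<lambda>(x, r). g s x r)"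
    "\<And>s x r. s \<in> insert 0 K \<Longrightarrow> r \<in> {s<..<piece_end \<tau> K s} \<Longrightarrow> g s x r = v x r"
    by metis
  define G where "G s = (\<lambda>(x, r). g s x r)" for s
  show thesis
  proof (rule that)
    show "continuous_on (UNIV \<times> {s..piece_end \<tau> K s}) (G s)" if "s \<in> insert 0 K" for s
      using g(1)[OF that] by (simp add: G_def)
    show "v x r = G (piece_start K r) (x, r)" if "r \<in> {0<..<\<tau>} - K" for x r
      using g(2)[OF piece_start_mem mem_piece[OF that]] by (simp add: G_def)
  qed
qed

lemma bounded_off_breakpoints:
  assumes "extends_continuously_on_pieces \<tau> K v"
  shows "\<exists>B\<ge>0. \<forall>r\<in>{0<..<\<tau>} - K. norm (v x r) \<le> B"
proof -
  obtain G where G: "\<And>s. s \<in> insert 0 K \<Longrightarrow> continuous_on (UNIV \<times> {s..piece_end \<tau> K s}) (G s)"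
    and v: "\<And>x r. r \<in> {0<..<\<tau>} - K \<Longrightarrow> v x r = G (piece_start K r) (x, r)"
    using piece_extensions[OF assms] by blast
  have "compact (G s ` ({x} \<times> {s..piece_end \<tau> K s}))" if "s \<in> insert 0 K" for s
  proof (rule compact_continuous_image)
    show "continuous_on ({x} \<times> {s..piece_end \<tau> K s}) (G s)"
      using G[OF that] by (rule continuous_on_subset) auto
  qed (simp add: compact_Times)
  then have "bounded (\<Union>s\<in>insert 0 K. G s ` ({x} \<times> {s..piece_end \<tau> K s}))"
    using finite_K by (auto intro: compact_imp_bounded)
  then obtain B where B: "\<And>s r. s \<in> insert 0 K \<Longrightarrow> r \<in> {s..piece_end \<tau> K s} \<Longrightarrow> norm (G s (x, r)) \<le> B"
    unfolding bounded_iff by fast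
  have "norm (v x r) \<le> max B 0" if "r \<in> {0<..<\<tau>} - K" for r
    using B[OF piece_start_mem[of r], of r] mem_piece[OF that] v[OF that] by auto
  then show ?thesis by (intro exI[of _ "max B 0"]) auto
qed

lemma approximation_by_piecewise_net:
  fixes v :: "'a::euclidean_space \<Rightarrow> real \<Rightarrow> 'a"
  assumes "extends_continuously_on_pieces \<tau> K v"
    and "0 < \<delta>"
  shows "\<exists>Ls. \<forall>r\<in>{0<..<\<tau>} - K. \<forall>x. norm x \<le> R \<longrightarrow> norm (v x r - piecewise_net K Ls x r) \<le> \<delta>"
proof -
  obtain G where G: "\<And>s. s \<in> insert 0 K \<Longrightarrow> continuous_on (UNIV \<times> {s..piece_end \<tau> K s}) (G s)"
    and v: "\<And>x r. r \<in> {0<..<\<tau>} - K \<Longrightarrow> v x r = G (piece_start K r) (x, r)"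
    using piece_extensions[OF assms(1)] by blast
  have "tanh_approximable (cball 0 R \<times> {s..piece_end \<tau> K s}) (G s)" if "s \<in> insert 0 K" for s
  proof (rule tanh_approximable_continuous)
    show "continuous_on (cball 0 R \<times> {s..piece_end \<tau> K s}) (G s)"
      using G[OF that] by (rule continuous_on_subset) auto
  qed (simp add: compact_Times)
  then have "\<forall>s\<in>insert 0 K. \<exists>l. \<forall>z\<in>cball 0 R \<times> {s..piece_end \<tau> K s}. norm (G s z - tanh_net l z) \<le> \<delta>"
    using \<open>0 < \<delta>\<close> unfolding tanh_approximable_def by blast
  then obtain Ls where Ls: "\<And>s z. s \<in> insert 0 K \<Longrightarrow> z \<in> cball 0 R \<times> {s..piece_end \<tau> K s} \<Longrightarrow>
      norm (G s z - tanh_net (Ls s) z) \<le> \<delta>"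
    by metis
  have "norm (v x r - piecewise_net K Ls x r) \<le> \<delta>" if "r \<in> {0<..<\<tau>} - K" "norm x \<le> R" for x r
    using Ls[OF piece_start_mem[of r], of "(x, r)"] mem_piece[OF that(1)] v[OF that(1)] that(2)
    by (simp add: piecewise_net_def)
  then show ?thesis by blast
qed

lemma flow_bounded_on_compact:
  fixes v :: "'a::euclidean_space \<Rightarrow> real \<Rightarrow> 'a"
  assumes flow: "is_flow \<tau> v \<phi>" and \<Omega>: "compact \<Omega>" and "0 \<le> L"
    and lip: "\<And>x y r. r \<in> {0<..<\<tau>} - K \<Longrightarrow> norm (v x r - v y r) \<le> L * norm (x - y)"
    and ext: "extends_continuously_on_pieces \<tau> K v"
  shows "\<exists>R. \<forall>x\<in>\<Omega>. \<forall>t\<in>{0..\<tau>}. norm (\<phi> t x) \<le> R"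
proof -
  obtain B where "0 \<le> B" and B: "\<And>r. r \<in> {0<..<\<tau>} - K \<Longrightarrow> norm (v 0 r) \<le> B"
    using bounded_off_breakpoints[OF ext] by blast
  obtain R0 where R0: "\<And>x. x \<in> \<Omega> \<Longrightarrow> norm x \<le> R0"
    using compact_imp_bounded[OF \<Omega>] bounded_iff by metis
  have "norm (\<phi> t x) \<le> (R0 + B * \<tau>) * exp (L * \<tau>)" if "x \<in> \<Omega>" "t \<in> {0..\<tau>}" for x t
    using flow_norm_bound[OF flow finite_K \<open>0 \<le> L\<close> \<open>0 \<le> B\<close> lip B that(2)] R0[OF that(1)]
    by (smt (verit) exp_gt_zero mult_right_mono)
  then show ?thesis by blast
qed

lemma flow_approximation_by_piecewise_net:
  fixes v :: "'a::euclidean_space \<Rightarrow> real \<Rightarrow> 'a"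
  assumes flow: "is_flow \<tau> v \<phi>" and "compact \<Omega>" and "0 < \<epsilon>" and "0 \<le> L"
    and lip: "\<And>x y r. r \<in> {0<..<\<tau>} - K \<Longrightarrow> norm (v x r - v y r) \<le> L * norm (x - y)"
    and ext: "extends_continuously_on_pieces \<tau> K v"
  obtains Ls where "\<And>\<psi> x t. is_flow \<tau> (piecewise_net K Ls) \<psi> \<Longrightarrow> x \<in> \<Omega> \<Longrightarrow> t \<in> {0..\<tau>} \<Longrightarrow>
      norm (\<phi> t x - \<psi> t x) \<le> \<epsilon>"
proof -
  obtain R where R: "\<And>x t. x \<in> \<Omega> \<Longrightarrow> t \<in> {0..\<tau>} \<Longrightarrow> norm (\<phi> t x) \<le> R"
    using flow_bounded_on_compact[OF flow \<open>compact \<Omega>\<close> \<open>0 \<le> L\<close> lip ext] by blast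
  define \<delta> where "\<delta> = \<epsilon> / (\<tau> + 1) / exp (L * \<tau>)"
  have "0 < \<delta>"
    using tau_pos \<open>0 < \<epsilon>\<close> by (simp add: \<delta>_def)
  have "\<delta> * \<tau> * exp (L * \<tau>) = \<epsilon> * (\<tau> / (\<tau> + 1))"
    by (simp add: \<delta>_def)
  also have "\<dots> < \<epsilon> * 1"
    using tau_pos \<open>0 < \<epsilon>\<close> by (intro mult_strict_left_mono) auto
  finally have small: "\<delta> * \<tau> * exp (L * \<tau>) < \<epsilon>" by simp
  obtain Ls where close: "\<And>x r. r \<in> {0<..<\<tau>} - K \<Longrightarrow> norm x \<le> R + \<epsilon> \<Longrightarrow>
      norm (v x r - piecewise_net K Ls x r) \<le> \<delta>"
    using approximation_by_piecewise_net[OF ext \<open>0 < \<delta>\<close>, of "R + \<epsilon>"] by blast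
  show thesis
  proof (rule that)
    fix \<psi> x t assume "is_flow \<tau> (piecewise_net K Ls) \<psi>" "x \<in> \<Omega>" "t \<in> {0..\<tau>}"
    then show "norm (\<phi> t x - \<psi> t x) \<le> \<epsilon>"
      using flow_perturbation[OF flow _ finite_K \<open>0 \<le> L\<close> _ lip close R small] \<open>0 < \<delta>\<close> by fastforce
  qed
qed

end

theorem mainTheorem7:
  fixes v :: "'a::euclidean_space \<Rightarrow> real \<Rightarrow> 'a"
    and \<phi> :: "real \<Rightarrow> 'a \<Rightarrow> 'a"
    and \<Omega> :: "'a set" and \<tau> \<epsilon> :: real
  assumes "0 < \<tau>" and "standing_assumption \<tau> v" and "is_flow \<tau> v \<phi>"
    and "compact \<Omega>" and "\<epsilon> > 0"
  shows "\<exists>N::nat. N > 0 \<and>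
    (\<exists>(a :: nat \<Rightarrow> real \<Rightarrow> 'a) (w :: nat \<Rightarrow> real \<Rightarrow> 'a) (b :: nat \<Rightarrow> real \<Rightarrow> real).
      (\<forall>i\<in>{1..N}. piecewise_smooth_fun \<tau> (a i) \<and> piecewise_smooth_fun \<tau> (w i)
                    \<and> piecewise_smooth_fun \<tau> (b i)) \<and>
      (let vt = (\<lambda>x t. \<Sum>i=1..N. tanh (w i t \<bullet> x + b i t) *\<^sub>R a i t) in
        (\<exists>\<psi>. is_flow \<tau> vt \<psi>) \<and>
        (\<forall>\<psi>. is_flow \<tau> vt \<psi> \<longrightarrow>
           (\<forall>x\<in>\<Omega>. \<forall>t\<in>{0..\<tau>}. norm (\<phi> t x - \<psi> t x) \<le> \<epsilon>))))"
proof -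
  obtain L K where "0 \<le> L" "breakpoints \<tau> K"
    and lip: "\<And>x y r. r \<in> {0<..<\<tau>} - K \<Longrightarrow> norm (v x r - v y r) \<le> L * norm (x - y)"
    and ext: "extends_continuously_on_pieces \<tau> K v"
    using standing_assumptionE[OF assms(2,1)] by metis
  interpret breakpoints \<tau> K by fact
  obtain Ls where close: "\<And>\<psi> x t. is_flow \<tau> (piecewise_net K Ls) \<psi> \<Longrightarrow> x \<in> \<Omega> \<Longrightarrow> t \<in> {0..\<tau>} \<Longrightarrow>
      norm (\<phi> t x - \<psi> t x) \<le> \<epsilon>"
    using flow_approximation_by_piecewise_net[OF assms(3,4,5) \<open>0 \<le> L\<close> lip ext] by blast
  obtain N :: nat and a w :: "nat \<Rightarrow> real \<Rightarrow> 'a" and b :: "nat \<Rightarrow> real \<Rightarrow> real" where "0 < N"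
    and smooth: "\<And>i. piecewise_smooth_fun \<tau> (a i) \<and> piecewise_smooth_fun \<tau> (w i) \<and> piecewise_smooth_fun \<tau> (b i)"
    and net: "piecewise_net K Ls = (\<lambda>x t. \<Sum>i=1..N. tanh (w i t \<bullet> x + b i t) *\<^sub>R a i t)"
    by (rule piecewise_net_neuron_form[where Ls = Ls]) blast
  show ?thesis
    by (rule exI[of _ N], rule conjI[OF \<open>0 < N\<close>], rule exI[of _ a], rule exI[of _ w], rule exI[of _ b])
      (unfold Let_def net [symmetric], use smooth close piecewise_net_flow_exists[of Ls] in auto)
qed

end
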